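(* Let $G=(X,\Sigma,\longrightarrow,X_0)$ be a plant, $R_i=(Z_i,\Sigma,\longrightarrow,Z_{0i})$ ($i=1,2$) specifications with $R_1\sqsubseteq R_2$, and $\Sigma'=\{\sigma\in\Sigma:z_1\xrightarrow{\sigma}\text{ in }R_1\text{ for some }z_1\in Z_1\}$. Take $\Sigma_r=\Sigma'$ and let $S\in\mathit{SPR}(G,R_2)$. If there exists a cc-simulation $\Phi$ from $S\|G$ to $R_2$ such that $\Phi^{-1}$ is a simulation from $R_2$ to $S\|G$ w.r.t. $\Sigma'$, then $S\in S(R_1,G,R_2)$. In particular, $\mathit{SPR}(G,R_2)\subseteq S(R_1,G,R_2)$ whenever $|Z_{02}|=1$.
   Context: An automaton is a 4-tuple $A=(Q,\Sigma,\longrightarrow,Q_0)$ with state set $Q$, finite event set $\Sigma$, ${\longrightarrow}\subseteq Q\times\Sigma\times Q$ and $\emptyset\neq Q_0\subseteq Q$. Write $q\xrightarrow{\sigma}q'$ for $(q,\sigma,q')\in{\longrightarrow}$, $q\xrightarrow{\sigma}$ if some such $q'$ exists; extend to strings. A state is reachable if reached from an initial state by some string. Events are partitioned into uncontrollable $\Sigma_{uc}$ and controllable $\Sigma_c$; $\Sigma_r\subseteq\Sigma$ denotes the set of required events. For a supervisor $S=(Y,\Sigma,\longrightarrow,Y_0)$, $S\|G=(Y\times X,\Sigma,\longrightarrow,Y_0\times X_0)$ with $(y,x)\xrightarrow{\sigma}(y',x')$ iff $y\xrightarrow{\sigma}y'$ and $x\xrightarrow{\sigma}x'$; $S$ is $\Sigma_{uc}$-admissible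 w.r.t. $G$ if for every reachable $(y,x)$ of $S\|G$ and $\sigma\in\Sigma_{uc}$, $x\xrightarrow{\sigma}$ implies $(y,x)\xrightarrow{\sigma}$. For automata $A_1,A_2$ (state sets $Q_1,Q_2$, initial sets $Q_{01},Q_{02}$) and $\Sigma''\subseteq\Sigma$, $\Phi\subseteq Q_1\times Q_2$ is a simulation w.r.t. $\Sigma''$ if (initial state) every $q_0\in Q_{01}$ has $p_0\in Q_{02}$ with $(q_0,p_0)\in\Phi$ and (forward) for $(q,p)\in\Phi$, $\sigma\in\Sigma''$, $q\xrightarrow{\sigma}q'$ there is $p'$ with $p\xrightarrow{\sigma}p'$, $(q',p')\in\Phi$; a simulation is a simulation w.r.t. $\Sigma$; a cc-simulation is a simulation that also satisfies ($\Sigma_r$-backward): for $(q,p)\in\Phi$, $\sigma\in\Sigma_r$, $p\xrightarrow{\sigma}p'$ there is $q'$ with $q\xrightarrow{\sigma}q'$, $(q',p')\in\Phi$. $A_1\sqsubseteq A_2$, $A_1\sqsubseteq_{cc}A_2$ mean such relations exist; $\Phi^{-1}=\{(p,q):(q,p)\in\Phi\}$. $\mathit{SPR}(G,R)$ is the set of $\Sigma_{uc}$-admissible supervisors $S$ with $S\|G\sqsubseteq_{cc}R$. $S(R_1,G,R_2)$ is the set of all $\Sigma_{uc}$-admissible supervisors $S$ with $R_1\sqsubseteq S\|G\sqsubseteq R_2$ (the $\Sigma_{uc}$-admissible solutions of the $(R_1,G,R_2)$-range control problem). *)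

theory Defs
  imports Main
begin

text \<open>Automata over a common finite event type 'e (the event set Sigma is UNIV :: 'e set).\<close>

record ('s, 'e) automaton =
  states :: "'s set"
  trans  :: "('s \<times> 'e \<times> 's) set"
  init   :: "'s set"

definition wf_aut :: "('s, 'e) automaton \<Rightarrow> bool" where
  "wf_aut A \<longleftrightarrow> trans A \<subseteq> states A \<times> UNIV \<times> states A \<and> init A \<subseteq> states A \<and> init A \<noteq> {}"

definition step_rel :: "('s, 'e) automaton \<Rightarrow> ('s \<times> 's) set" where
  "step_rel A = {(q, q'). \<exists>\<sigma>. (q, \<sigma>, q') \<in> trans A}"

definition reachable :: "('s, 'e) automaton \<Rightarrow> 's set" where
  "reachable A = {q. \<exists>q0 \<in> init A. (q0, q) \<in> (step_rel A)\<^sup>*}"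

definition sync :: "('y, 'e) automaton \<Rightarrow> ('x, 'e) automaton \<Rightarrow> ('y \<times> 'x, 'e) automaton" where
  "sync S G = \<lparr> states = states S \<times> states G,
     trans = {((y, x), \<sigma>, (y', x')). (y, \<sigma>, y') \<in> trans S \<and> (x, \<sigma>, x') \<in> trans G},
     init = init S \<times> init G \<rparr>"

definition admissible :: "'e set \<Rightarrow> ('y, 'e) automaton \<Rightarrow> ('x, 'e) automaton \<Rightarrow> bool" where
  "admissible Euc S G \<longleftrightarrow>
     (\<forall>y x. (y, x) \<in> reachable (sync S G) \<longrightarrow>
        (\<forall>\<sigma> \<in> Euc. (\<exists>x'. (x, \<sigma>, x') \<in> trans G) \<longrightarrow> (\<exists>p'. ((y, x), \<sigma>, p') \<in> trans (sync S G))))"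

definition sim_wrt :: "'e set \<Rightarrow> ('a, 'e) automaton \<Rightarrow> ('b, 'e) automaton \<Rightarrow> ('a \<times> 'b) set \<Rightarrow> bool" where
  "sim_wrt E A1 A2 \<Phi> \<longleftrightarrow>
     (\<forall>q0 \<in> init A1. \<exists>p0 \<in> init A2. (q0, p0) \<in> \<Phi>) \<and>
     (\<forall>q p \<sigma> q'. (q, p) \<in> \<Phi> \<longrightarrow> \<sigma> \<in> E \<longrightarrow> (q, \<sigma>, q') \<in> trans A1 \<longrightarrow>
        (\<exists>p'. (p, \<sigma>, p') \<in> trans A2 \<and> (q', p') \<in> \<Phi>))"

definition sim :: "('a, 'e) automaton \<Rightarrow> ('b, 'e) automaton \<Rightarrow> ('a \<times> 'b) set \<Rightarrow> bool" where
  "sim A1 A2 \<Phi> \<longleftrightarrow> sim_wrt UNIV A1 A2 \<Phi>"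

definition cc_sim :: "'e set \<Rightarrow> ('a, 'e) automaton \<Rightarrow> ('b, 'e) automaton \<Rightarrow> ('a \<times> 'b) set \<Rightarrow> bool" where
  "cc_sim Sr A1 A2 \<Phi> \<longleftrightarrow> sim A1 A2 \<Phi> \<and>
     (\<forall>q p \<sigma> p'. (q, p) \<in> \<Phi> \<longrightarrow> \<sigma> \<in> Sr \<longrightarrow> (p, \<sigma>, p') \<in> trans A2 \<longrightarrow>
        (\<exists>q'. (q, \<sigma>, q') \<in> trans A1 \<and> (q', p') \<in> \<Phi>))"

definition simulated :: "('a, 'e) automaton \<Rightarrow> ('b, 'e) automaton \<Rightarrow> bool" where
  "simulated A1 A2 \<longleftrightarrow> (\<exists>\<Phi>. sim A1 A2 \<Phi>)"

definition cc_simulated :: "'e set \<Rightarrow> ('a, 'e) automaton \<Rightarrow> ('b, 'e) automaton \<Rightarrow> bool" where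
  "cc_simulated Sr A1 A2 \<longleftrightarrow> (\<exists>\<Phi>. cc_sim Sr A1 A2 \<Phi>)"

definition SPR :: "'e set \<Rightarrow> 'e set \<Rightarrow> ('x, 'e) automaton \<Rightarrow> ('r, 'e) automaton \<Rightarrow> ('y, 'e) automaton set" where
  "SPR Euc Sr G R = {S. wf_aut S \<and> admissible Euc S G \<and> cc_simulated Sr (sync S G) R}"

text \<open>S(R1,G,R2): admissible solutions of the range control problem.\<close>
definition range_sols :: "'e set \<Rightarrow> ('r1, 'e) automaton \<Rightarrow> ('x, 'e) automaton \<Rightarrow> ('r2, 'e) automaton \<Rightarrow> ('y, 'e) automaton set" where
  "range_sols Euc R1 G R2 = {S. wf_aut S \<and> admissible Euc S G \<and> simulated R1 (sync S G) \<and> simulated (sync S G) R2}"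

definition enabled_events :: "('s, 'e) automaton \<Rightarrow> 'e set" where
  "enabled_events A = {\<sigma>. \<exists>z \<in> states A. \<exists>z'. (z, \<sigma>, z') \<in> trans A}"

end

theory Submission
  imports Defs
begin

text \<open>A simulation of R1 by R2, followed by the converse of the cc-simulation Phi, is a simulation
  of R1 by S||G with respect to the events of R1; since R1 uses no other events, it is a simulation
  outright. Together with Phi itself this places S||G between R1 and R2. If R2 has a single
  initial state, the converse of any cc-simulation into R2 satisfies the initial-state condition
  automatically, and its forward condition on required events is exactly the backward condition
  of the cc-simulation.\<close>

lemma sim_wrt_antimono:
  assumes "E \<subseteq> E'" and "sim_wrt E' A B \<Phi>"
  shows "sim_wrt E A B \<Phi>"
  using assms unfolding sim_wrt_def by blast

lemma sim_wrt_relcomp: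
  assumes "sim_wrt E A B \<Phi>" and "sim_wrt E B C \<Psi>"
  shows "sim_wrt E A C (\<Phi> O \<Psi>)"
  unfolding sim_wrt_def
proof (intro conjI allI impI ballI)
  fix a0 assume "a0 \<in> init A"
  then obtain b0 where "b0 \<in> init B" "(a0, b0) \<in> \<Phi>"
    using assms(1) unfolding sim_wrt_def by blast
  moreover from \<open>b0 \<in> init B\<close> obtain c0 where "c0 \<in> init C" "(b0, c0) \<in> \<Psi>"
    using assms(2) unfolding sim_wrt_def by blast
  ultimately show "\<exists>c0 \<in> init C. (a0, c0) \<in> \<Phi> O \<Psi>" by blast
next
  fix a c \<sigma> a'
  assume "(a, c) \<in> \<Phi> O \<Psi>" and "\<sigma> \<in> E" and "(a, \<sigma>, a') \<in> trans A"
  then obtain b where "(a, b) \<in> \<Phi>" "(b, c) \<in> \<Psi>" by blast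
  then obtain b' where "(b, \<sigma>, b') \<in> trans B" "(a', b') \<in> \<Phi>"
    using assms(1) \<open>\<sigma> \<in> E\<close> \<open>(a, \<sigma>, a') \<in> trans A\<close> unfolding sim_wrt_def by blast
  moreover from this obtain c' where "(c, \<sigma>, c') \<in> trans C" "(b', c') \<in> \<Psi>"
    using assms(2) \<open>(b, c) \<in> \<Psi>\<close> \<open>\<sigma> \<in> E\<close> unfolding sim_wrt_def by blast
  ultimately show "\<exists>c'. (c, \<sigma>, c') \<in> trans C \<and> (a', c') \<in> \<Phi> O \<Psi>" by blast
qed

lemma sim_iff_sim_wrt_enabled_events:
  assumes "wf_aut A"
  shows "sim A B \<Phi> \<longleftrightarrow> sim_wrt (enabled_events A) A B \<Phi>"
proof -
  have "\<sigma> \<in> enabled_events A" if "(q, \<sigma>, q') \<in> trans A" for q \<sigma> q'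
    using that assms unfolding wf_aut_def enabled_events_def by blast
  then show ?thesis unfolding sim_def sim_wrt_def by blast
qed

lemma cc_sim_imp_sim: "cc_sim Sr A B \<Phi> \<Longrightarrow> sim A B \<Phi>"
  unfolding cc_sim_def by blast

lemma cc_sim_converse_sim_wrt:
  assumes "cc_sim Sr A B \<Phi>" and "init A \<noteq> {}" and "card (init B) = 1"
  shows "sim_wrt Sr B A (\<Phi>\<inverse>)"
proof -
  obtain b0 where b0: "init B = {b0}" using assms(3) card_1_singletonE by blast
  obtain a0 where "a0 \<in> init A" using assms(2) by blast
  then obtain b where "b \<in> init B" "(a0, b) \<in> \<Phi>"
    using cc_sim_imp_sim[OF assms(1)] unfolding sim_def sim_wrt_def by blast
  then have "(a0, b0) \<in> \<Phi>" using b0 by simp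
  with \<open>a0 \<in> init A\<close> b0 assms(1) show ?thesis
    unfolding sim_wrt_def cc_sim_def by auto
qed

lemma init_sync_nonempty:
  assumes "wf_aut S" and "wf_aut G"
  shows "init (sync S G) \<noteq> {}"
  using assms unfolding wf_aut_def sync_def by simp

lemma range_sol_if_cc_sim_converse_sim_wrt:
  assumes "wf_aut R1" and "simulated R1 R2"
    and "S \<in> SPR Euc (enabled_events R1) G R2"
    and "cc_sim (enabled_events R1) (sync S G) R2 \<Phi>"
    and "sim_wrt (enabled_events R1) R2 (sync S G) (\<Phi>\<inverse>)"
  shows "S \<in> range_sols Euc R1 G R2"
proof -
  obtain \<Psi> where "sim R1 R2 \<Psi>" using assms(2) unfolding simulated_def by blast
  then have "sim_wrt (enabled_events R1) R1 R2 \<Psi>"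
    unfolding sim_def by (rule sim_wrt_antimono[OF subset_UNIV])
  then have "sim_wrt (enabled_events R1) R1 (sync S G) (\<Psi> O \<Phi>\<inverse>)"
    using assms(5) by (rule sim_wrt_relcomp)
  then have "simulated R1 (sync S G)"
    using sim_iff_sim_wrt_enabled_events[OF assms(1)] unfolding simulated_def by blast
  moreover have "simulated (sync S G) R2"
    using cc_sim_imp_sim[OF assms(4)] unfolding simulated_def by blast
  ultimately show ?thesis using assms(3) unfolding SPR_def range_sols_def by blast
qed

theorem proposition3:
  fixes G :: "('x, 'e::finite) automaton"
    and R1 :: "('z1, 'e) automaton"
    and R2 :: "('z2, 'e) automaton"
    and S :: "('y, 'e) automaton"
    and Euc :: "'e set"
  assumes "wf_aut G" and "wf_aut R1" and "wf_aut R2"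
    and "simulated R1 R2"
  shows "(S \<in> SPR Euc (enabled_events R1) G R2 \<and>
           (\<exists>\<Phi>. cc_sim (enabled_events R1) (sync S G) R2 \<Phi> \<and>
                 sim_wrt (enabled_events R1) R2 (sync S G) (\<Phi>\<inverse>))
          \<longrightarrow> S \<in> range_sols Euc R1 G R2)
       \<and> (card (init R2) = 1 \<longrightarrow>
          (SPR Euc (enabled_events R1) G R2 :: ('y, 'e) automaton set) \<subseteq> range_sols Euc R1 G R2)"
proof (intro conjI impI subsetI)
  assume "S \<in> SPR Euc (enabled_events R1) G R2 \<and>
           (\<exists>\<Phi>. cc_sim (enabled_events R1) (sync S G) R2 \<Phi> \<and>
                 sim_wrt (enabled_events R1) R2 (sync S G) (\<Phi>\<inverse>))"
  then show "S \<in> range_sols Euc R1 G R2"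
    using range_sol_if_cc_sim_converse_sim_wrt assms(2,4) by blast
next
  fix S' :: "('y, 'e) automaton"
  assume "card (init R2) = 1" and S': "S' \<in> SPR Euc (enabled_events R1) G R2"
  then obtain \<Phi> where \<Phi>: "cc_sim (enabled_events R1) (sync S' G) R2 \<Phi>"
    unfolding SPR_def cc_simulated_def by blast
  have "init (sync S' G) \<noteq> {}"
    using S' assms(1) init_sync_nonempty unfolding SPR_def by blast
  with \<Phi> \<open>card (init R2) = 1\<close>
  have "sim_wrt (enabled_events R1) R2 (sync S' G) (\<Phi>\<inverse>)"
    using cc_sim_converse_sim_wrt by blast
  with \<Phi> S' show "S' \<in> range_sols Euc R1 G R2"
    using range_sol_if_cc_sim_converse_sim_wrt assms(2,4) by blast
qed

end
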